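(* Let the language contain a constant and let $t_1,t_2,\dots$ be a fixed enumeration of all closed terms. Let $E$ be a sentence containing only weak quantifier occurrences. Then $\models_1 E$ iff some expansion $E_n$ of $E$ is valid, i.e. $\models_1 E_n$ (a Herbrand expansion).
   Context: The propositional setting is as follows. - A lattice-oriented signature $\mathcal{L}$ is a finite set of connectives. Each connective $c$ has an arity $n_c$ and a polarity $p_c:\{1,\dots,n_c\}\to\{-,+\}$. It includes binary $\lor,\land,\to$ with $p_\lor\equiv p_\land\equiv +$, $p_\to(1)=-$ and $p_\to(2)=+$. - A finite $\mathcal{L}$-lattice $\mathbf{A}$ is a finite set $L$ with operations $c^L$ such that $(L,\lor^L,\land^L)$ is a lattice with order $\le$ and top $1$. Each $c^L$ is monotone in the arguments with polarity $+$ and antitone in those with polarity $-$. Moreover $1\le a\to b$ iff $a\le b$. The first-order setting is as follows. - Fix a finite $\mathcal{L}$-lattice $\mathbf{A}$ and a predicate language with predicate and function symbols of given arities. - Terms and formulas are built as usual from object variables using the connectives of $\mathcal{L}$ and the quantifiers $\forall,\exists$. - A structure consists of a nonempty set $S$, maps $P^S:S^n\to L$ for the $n$-ary predicate symbols, and maps $f^S:S^n\to S$ for the $n$-ary function symbols. - An evaluation $v$ maps variables to $S$. Formulas get values in $L$: connectives are interpreted by $c^L$; $\|\forall x\varphi\|_v=\bigwedge_{a\in S}\|\varphi\|_{v[x\to a]}$ and $\|\exists x\varphi\|_v=\bigvee_{a\in S}\|\varphi\|_{v[x\to a]}$. - $\models_1 C$ means $\|C\|_v=1$ for every structure and every evaluation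 $v$. - An occurrence in a formula is positive or negative: the whole formula is positive, and going into argument $i$ of a connective $c$ keeps the polarity if $p_c(i)=+$ and flips it if $p_c(i)=-$. Quantifiers do not change polarity. - Weak quantifier occurrences are positive occurrences of $\exists$ and negative occurrences of $\forall$; strong ones are positive $\forall$ and negative $\exists$. - The $n$-th expansion $E_n$ of $E$ is obtained by replacing, from the inside out, every subformula $\exists xA(x)$ by $\bigvee_{i=1}^nA(t_i)$ and every subformula $\forall xA(x)$ by $\bigwedge_{i=1}^nA(t_i)$. *)

theory Defs
  imports Main
begin

text \<open>Connectives are elements of a type 'c, with arity ar and polarity pol;
  pol c i = True means polarity + for argument i (arguments indexed from 0).
  cor, cand, cimp are the distinguished binary connectives.\<close>

definition lo_signature ::
  "('c \<Rightarrow> nat) \<Rightarrow> ('c \<Rightarrow> nat \<Rightarrow> bool) \<Rightarrow> 'c \<Rightarrow> 'c \<Rightarrow> 'c \<Rightarrow> bool" where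
  "lo_signature ar pol cor cand cimp \<longleftrightarrow>
     finite (UNIV :: 'c set) \<and> distinct [cor, cand, cimp] \<and>
     ar cor = 2 \<and> ar cand = 2 \<and> ar cimp = 2 \<and>
     pol cor 0 \<and> pol cor 1 \<and> pol cand 0 \<and> pol cand 1 \<and>
     \<not> pol cimp 0 \<and> pol cimp 1"

definition L_lattice ::
  "('c \<Rightarrow> nat) \<Rightarrow> ('c \<Rightarrow> nat \<Rightarrow> bool) \<Rightarrow> 'c \<Rightarrow> 'c \<Rightarrow> 'c
   \<Rightarrow> ('c \<Rightarrow> 'a::{finite,complete_lattice} list \<Rightarrow> 'a) \<Rightarrow> bool" where
  "L_lattice ar pol cor cand cimp ops \<longleftrightarrow>
     (\<forall>a b. ops cor [a, b] = sup a b) \<and>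
     (\<forall>a b. ops cand [a, b] = inf a b) \<and>
     (\<forall>c xs i a b. length xs = ar c \<and> i < ar c \<and> a \<le> b \<longrightarrow>
        (if pol c i then ops c (xs[i := a]) \<le> ops c (xs[i := b])
                    else ops c (xs[i := b]) \<le> ops c (xs[i := a]))) \<and>
     (\<forall>a b. top \<le> ops cimp [a, b] \<longleftrightarrow> a \<le> b)"

datatype 'f trm = Var nat | Fn 'f "'f trm list"

datatype ('c, 'p, 'f) fm =
    Atom 'p "'f trm list"
  | Conn 'c "('c, 'p, 'f) fm list"
  | All nat "('c, 'p, 'f) fm"
  | Ex nat "('c, 'p, 'f) fm"

fun wf_trm :: "('f \<Rightarrow> nat) \<Rightarrow> 'f trm \<Rightarrow> bool" where
  "wf_trm fa (Var x) = True"
| "wf_trm fa (Fn f ts) = (length ts = fa f \<and> (\<forall>s\<in>set ts. wf_trm fa s))"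

fun tvars :: "'f trm \<Rightarrow> nat set" where
  "tvars (Var x) = {x}"
| "tvars (Fn f ts) = (\<Union>s\<in>set ts. tvars s)"

definition closed_trm :: "'f trm \<Rightarrow> bool" where
  "closed_trm s \<longleftrightarrow> tvars s = {}"

fun wf_fm :: "('c \<Rightarrow> nat) \<Rightarrow> ('f \<Rightarrow> nat) \<Rightarrow> ('p \<Rightarrow> nat) \<Rightarrow> ('c, 'p, 'f) fm \<Rightarrow> bool" where
  "wf_fm ar fa pa (Atom p ts) = (length ts = pa p \<and> (\<forall>s\<in>set ts. wf_trm fa s))"
| "wf_fm ar fa pa (Conn c fs) = (length fs = ar c \<and> (\<forall>\<phi>\<in>set fs. wf_fm ar fa pa \<phi>))"
| "wf_fm ar fa pa (All x \<phi>) = wf_fm ar fa pa \<phi>"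
| "wf_fm ar fa pa (Ex x \<phi>) = wf_fm ar fa pa \<phi>"

fun fvars :: "('c, 'p, 'f) fm \<Rightarrow> nat set" where
  "fvars (Atom p ts) = (\<Union>s\<in>set ts. tvars s)"
| "fvars (Conn c fs) = (\<Union>\<phi>\<in>set fs. fvars \<phi>)"
| "fvars (All x \<phi>) = fvars \<phi> - {x}"
| "fvars (Ex x \<phi>) = fvars \<phi> - {x}"

definition sentence :: "('c, 'p, 'f) fm \<Rightarrow> bool" where
  "sentence E \<longleftrightarrow> fvars E = {}"

text \<open>only_weak pol b \<phi>: every quantifier occurrence in \<phi> is weak, where
  b = True means that \<phi> itself occurs positively. Weak: positive Ex,
  negative All.\<close>

fun only_weak :: "('c \<Rightarrow> nat \<Rightarrow> bool) \<Rightarrow> bool \<Rightarrow> ('c, 'p, 'f) fm \<Rightarrow> bool"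
and only_weak_args :: "('c \<Rightarrow> nat \<Rightarrow> bool) \<Rightarrow> 'c \<Rightarrow> nat \<Rightarrow> bool \<Rightarrow> ('c, 'p, 'f) fm list \<Rightarrow> bool" where
  "only_weak pol b (Atom p ts) = True"
| "only_weak pol b (Conn c fs) = only_weak_args pol c 0 b fs"
| "only_weak pol b (Ex x \<phi>) = (b \<and> only_weak pol b \<phi>)"
| "only_weak pol b (All x \<phi>) = ((\<not> b) \<and> only_weak pol b \<phi>)"
| "only_weak_args pol c i b [] = True"
| "only_weak_args pol c i b (\<phi> # fs) =
     (only_weak pol (if pol c i then b else \<not> b) \<phi> \<and> only_weak_args pol c (Suc i) b fs)"

fun tsubst :: "nat \<Rightarrow> 'f trm \<Rightarrow> 'f trm \<Rightarrow> 'f trm" where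
  "tsubst x s (Var y) = (if x = y then s else Var y)"
| "tsubst x s (Fn f ts) = Fn f (map (tsubst x s) ts)"

text \<open>Substitution of a term for the free occurrences of x (only used with closed terms).\<close>

fun subst :: "nat \<Rightarrow> 'f trm \<Rightarrow> ('c, 'p, 'f) fm \<Rightarrow> ('c, 'p, 'f) fm" where
  "subst x s (Atom p ts) = Atom p (map (tsubst x s) ts)"
| "subst x s (Conn c fs) = Conn c (map (subst x s) fs)"
| "subst x s (All y \<phi>) = (if x = y then All y \<phi> else All y (subst x s \<phi>))"
| "subst x s (Ex y \<phi>) = (if x = y then Ex y \<phi> else Ex y (subst x s \<phi>))"

fun big_conn :: "'c \<Rightarrow> ('c, 'p, 'f) fm list \<Rightarrow> ('c, 'p, 'f) fm" where
  "big_conn c [] = Conn c []"  (* never used: expansions are taken with n \<ge> 1 *)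
| "big_conn c [\<phi>] = \<phi>"
| "big_conn c (\<phi> # \<psi> # fs) = Conn c [\<phi>, big_conn c (\<psi> # fs)]"

fun expand :: "'c \<Rightarrow> 'c \<Rightarrow> (nat \<Rightarrow> 'f trm) \<Rightarrow> nat \<Rightarrow> ('c, 'p, 'f) fm \<Rightarrow> ('c, 'p, 'f) fm" where
  "expand cor cand t n (Atom p ts) = Atom p ts"
| "expand cor cand t n (Conn c fs) = Conn c (map (expand cor cand t n) fs)"
| "expand cor cand t n (Ex x \<phi>) =
     big_conn cor (map (\<lambda>i. subst x (t i) (expand cor cand t n \<phi>)) [1..<Suc n])"
| "expand cor cand t n (All x \<phi>) =
     big_conn cand (map (\<lambda>i. subst x (t i) (expand cor cand t n \<phi>)) [1..<Suc n])"

fun teval :: "('f \<Rightarrow> 'u list \<Rightarrow> 'u) \<Rightarrow> (nat \<Rightarrow> 'u) \<Rightarrow> 'f trm \<Rightarrow> 'u" where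
  "teval F v (Var x) = v x"
| "teval F v (Fn f ts) = F f (map (teval F v) ts)"

fun eval :: "('c \<Rightarrow> 'a::complete_lattice list \<Rightarrow> 'a) \<Rightarrow> 'u set \<Rightarrow> ('p \<Rightarrow> 'u list \<Rightarrow> 'a)
    \<Rightarrow> ('f \<Rightarrow> 'u list \<Rightarrow> 'u) \<Rightarrow> (nat \<Rightarrow> 'u) \<Rightarrow> ('c, 'p, 'f) fm \<Rightarrow> 'a" where
  "eval ops S P F v (Atom p ts) = P p (map (teval F v) ts)"
| "eval ops S P F v (Conn c fs) = ops c (map (eval ops S P F v) fs)"
| "eval ops S P F v (All x \<phi>) = Inf ((\<lambda>a. eval ops S P F (v(x := a)) \<phi>) ` S)"
| "eval ops S P F v (Ex x \<phi>) = Sup ((\<lambda>a. eval ops S P F (v(x := a)) \<phi>) ` S)"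

definition is_structure :: "('f \<Rightarrow> nat) \<Rightarrow> 'u set \<Rightarrow> ('f \<Rightarrow> 'u list \<Rightarrow> 'u) \<Rightarrow> bool" where
  "is_structure fa S F \<longleftrightarrow> S \<noteq> {} \<and>
     (\<forall>f us. length us = fa f \<and> set us \<subseteq> S \<longrightarrow> F f us \<in> S)"

definition valid1 :: "'u itself \<Rightarrow> ('c \<Rightarrow> 'a::complete_lattice list \<Rightarrow> 'a) \<Rightarrow> ('f \<Rightarrow> nat)
    \<Rightarrow> ('c, 'p, 'f) fm \<Rightarrow> bool" where
  "valid1 U ops fa E \<longleftrightarrow>
     (\<forall>(S :: 'u set) (P :: 'p \<Rightarrow> 'u list \<Rightarrow> 'a) F v.
        is_structure fa S F \<and> range v \<subseteq> S \<longrightarrow> eval ops S P F v E = top)"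

end

theory Submission
  imports Defs
begin

text \<open>An expansion replaces each weak quantifier by a finite join or meet of instances, so by
  monotonicity of the connectives its value never exceeds that of E; hence validity of some E_n gives
  validity of E. Conversely, if no E_n is valid, each E_n is refuted by some interpretation, and since
  E_n is quantifier-free with ground atoms the refutation can be moved into a copy of the Herbrand
  universe inside the domain type. Expansions grow with n and the lattice is finite, so a compactness
  (cluster point) argument yields one interpretation of the ground atoms refuting all E_n at once. In
  that Herbrand structure every element is named by some t_i, so E_n eventually takes the value of E,
  which contradicts the validity of E.\<close>

fun atoms :: "('c, 'p, 'f) fm \<Rightarrow> ('p \<times> 'f trm list) set" where
  "atoms (Atom p ts) = {(p, ts)}"
| "atoms (Conn c fs) = (\<Union>\<phi>\<in>set fs. atoms \<phi>)"
| "atoms (All x \<phi>) = atoms \<phi>"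
| "atoms (Ex x \<phi>) = atoms \<phi>"

fun qfree :: "('c, 'p, 'f) fm \<Rightarrow> bool" where
  "qfree (Atom p ts) = True"
| "qfree (Conn c fs) = (\<forall>\<phi>\<in>set fs. qfree \<phi>)"
| "qfree (All x \<phi>) = False"
| "qfree (Ex x \<phi>) = False"

lemma finite_atoms: "finite (atoms \<phi>)"
  by (induction \<phi>) auto

lemma teval_tsubst: "teval F v (tsubst x s r) = teval F (v(x := teval F v s)) r"
  by (induction r) (auto intro!: arg_cong[where f = "F _"])

lemma wf_trm_tsubst: "wf_trm fa r \<Longrightarrow> wf_trm fa s \<Longrightarrow> wf_trm fa (tsubst x s r)"
  by (induction r) auto

lemma tvars_tsubst: "tvars (tsubst x s r) \<subseteq> (tvars r - {x}) \<union> tvars s"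
  by (induction r) auto

lemma qfree_subst: "qfree \<psi> \<Longrightarrow> qfree (subst x s \<psi>)"
  by (induction \<psi>) auto

lemma eval_subst:
  "qfree \<psi> \<Longrightarrow> eval ops S P F v (subst x s \<psi>) = eval ops S P F (v(x := teval F v s)) \<psi>"
  by (induction \<psi>) (auto simp: teval_tsubst comp_def intro!: arg_cong[where f = "ops _"])

lemma atoms_subst:
  "qfree \<psi> \<Longrightarrow> atoms (subst x s \<psi>) = (\<lambda>(p, ts). (p, map (tsubst x s) ts)) ` atoms \<psi>"
  by (induction \<psi>) auto

lemma qfree_big_conn: "\<forall>\<phi>\<in>set fs. qfree \<phi> \<Longrightarrow> qfree (big_conn c fs)"
  by (induction c fs rule: big_conn.induct) auto

lemma atoms_big_conn: "atoms (big_conn c fs) = (\<Union>\<phi>\<in>set fs. atoms \<phi>)"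
  by (induction c fs rule: big_conn.induct) auto

lemma qfree_expand: "qfree (expand cor cand t n \<phi>)"
  by (induction \<phi>) (auto intro!: qfree_big_conn qfree_subst)

lemma eval_qfree_cong:
  "qfree \<psi> \<Longrightarrow> (\<forall>(p, ts)\<in>atoms \<psi>. P p (map (teval F v) ts) = P' p (map (teval F' v') ts))
   \<Longrightarrow> eval ops S P F v \<psi> = eval ops S' P' F' v' \<psi>"
  by (induction \<psi>) (auto intro!: arg_cong[where f = "ops _"])

lemma teval_in_domain:
  "is_structure fa S F \<Longrightarrow> wf_trm fa s \<Longrightarrow> range v \<subseteq> S \<Longrightarrow> teval F v s \<in> S"
proof (induction s)
  case (Fn f ts)
  then have "set (map (teval F v) ts) \<subseteq> S" "length (map (teval F v) ts) = fa f"
    by auto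
  with Fn.prems(1) show ?case
    by (auto simp: is_structure_def)
qed auto

lemma atoms_expand:
  assumes "\<forall>i\<ge>1. wf_trm fa (t i) \<and> tvars (t i) = {}"
  shows "wf_fm ar fa pa \<phi> \<Longrightarrow> (p, ts) \<in> atoms (expand cor cand t n \<phi>) \<Longrightarrow> s \<in> set ts \<Longrightarrow>
    wf_trm fa s \<and> tvars s \<subseteq> fvars \<phi>"
proof (induction \<phi> arbitrary: p ts s)
  case (Ex x \<phi>)
  then obtain i s0 where "i \<ge> 1" "s = tsubst x (t i) s0" "wf_trm fa s0 \<and> tvars s0 \<subseteq> fvars \<phi>"
    by (fastforce simp: atoms_big_conn atoms_subst[OF qfree_expand])
  with assms show ?case
    using wf_trm_tsubst tvars_tsubst[of x "t i" s0] by fastforce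
next
  case (All x \<phi>)
  then obtain i s0 where "i \<ge> 1" "s = tsubst x (t i) s0" "wf_trm fa s0 \<and> tvars s0 \<subseteq> fvars \<phi>"
    by (fastforce simp: atoms_big_conn atoms_subst[OF qfree_expand])
  with assms show ?case
    using wf_trm_tsubst tvars_tsubst[of x "t i" s0] by fastforce
qed fastforce+

definition signed_le :: "bool \<Rightarrow> 'a::order \<Rightarrow> 'a \<Rightarrow> bool" where
  "signed_le b x y \<longleftrightarrow> (if b then x \<le> y else y \<le> x)"

lemma ops_mono:
  assumes L: "L_lattice ar pol cor cand cimp ops"
    and len: "length xs = ar c" "length ys = ar c"
    and le: "\<forall>i<ar c. signed_le (pol c i) (xs ! i) (ys ! i)"
  shows "ops c xs \<le> ops c ys"
proof -
  \<comment> \<open>Change one argument at a time.\<close>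
  define z where "z k = take k ys @ drop k xs" for k
  have step: "ops c (z k) \<le> ops c (z (Suc k))" if k: "k < ar c" for k
  proof -
    have "length (z k) = ar c"
      using k len by (simp add: z_def)
    moreover have "z k = (z k)[k := xs ! k]" "z (Suc k) = (z k)[k := ys ! k]"
      using k len unfolding z_def
      by (auto intro!: nth_equalityI simp: nth_append nth_list_update min_def take_Suc_conv_app_nth)
    ultimately show ?thesis
      using L k le[rule_format, OF k] unfolding L_lattice_def signed_le_def
      by (smt (verit))
  qed
  have "k \<le> ar c \<Longrightarrow> ops c xs \<le> ops c (z k)" for k
  proof (induction k)
    case (Suc k)
    then show ?case
      using step[of k] by simp
  qed (simp add: z_def)
  from this[of "ar c"] show ?thesis
    using len by (simp add: z_def)
qed

lemma only_weak_args_nth: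
  "only_weak_args pol c k b fs \<Longrightarrow> i < length fs \<Longrightarrow> only_weak pol (pol c (k + i) = b) (fs ! i)"
proof (induction fs arbitrary: k i)
  case (Cons \<phi> fs)
  show ?case
  proof (cases i)
    case (Suc j)
    with Cons.prems Cons.IH[of "Suc k" j] show ?thesis
      by simp
  qed (use Cons.prems in \<open>auto split: if_splits\<close>)
qed simp

lemma only_weak_Conn_nth:
  "only_weak pol b (Conn c fs) \<Longrightarrow> i < length fs \<Longrightarrow> only_weak pol (pol c i = b) (fs ! i)"
  using only_weak_args_nth[of pol c 0 b fs i] by simp

lemma eval_big_conn_sup:
  assumes "\<forall>a b. ops cor [a, b] = sup a b" "fs \<noteq> []"
  shows "eval ops S P F v (big_conn cor fs) = Sup (eval ops S P F v ` set fs)"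
  using assms(2) by (induction fs rule: induct_list012) (auto simp: assms(1))

lemma eval_big_conn_inf:
  assumes "\<forall>a b. ops cand [a, b] = inf a b" "fs \<noteq> []"
  shows "eval ops S P F v (big_conn cand fs) = Inf (eval ops S P F v ` set fs)"
  using assms(2) by (induction fs rule: induct_list012) (auto simp: assms(1))

lemma eval_expand_Ex:
  assumes "L_lattice ar pol cor cand cimp ops" "n \<ge> 1"
  shows "eval ops S P F v (expand cor cand t n (Ex x \<phi>)) =
    (SUP i\<in>{1..n}. eval ops S P F (v(x := teval F v (t i))) (expand cor cand t n \<phi>))"
  using assms by (simp add: L_lattice_def eval_big_conn_sup image_image eval_subst[OF qfree_expand]
      atLeastLessThanSuc_atLeastAtMost del: upt_Suc)

lemma eval_expand_All:
  assumes "L_lattice ar pol cor cand cimp ops" "n \<ge> 1"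
  shows "eval ops S P F v (expand cor cand t n (All x \<phi>)) =
    (INF i\<in>{1..n}. eval ops S P F (v(x := teval F v (t i))) (expand cor cand t n \<phi>))"
  using assms by (simp add: L_lattice_def eval_big_conn_inf image_image eval_subst[OF qfree_expand]
      atLeastLessThanSuc_atLeastAtMost del: upt_Suc)

lemma ops_map_signed_le:
  assumes L: "L_lattice ar pol cor cand cimp ops" and len: "length fs = ar c"
    and le: "\<And>i. i < length fs \<Longrightarrow> signed_le (pol c i = b) (g (fs ! i)) (h (fs ! i))"
  shows "signed_le b (ops c (map g fs)) (ops c (map h fs))"
proof (cases b)
  case True
  with le len show ?thesis
    by (auto simp: signed_le_def intro!: ops_mono[OF L])
next
  case False
  with le len show ?thesis
    by (auto simp: signed_le_def intro!: ops_mono[OF L] split: if_splits)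
qed

lemma signed_le_eval_expand:
  assumes L: "L_lattice ar pol cor cand cimp ops" and S: "is_structure fa S F"
    and t: "\<forall>i\<ge>1. wf_trm fa (t i)" and n: "n \<ge> 1"
  shows "only_weak pol b \<phi> \<Longrightarrow> wf_fm ar fa pa \<phi> \<Longrightarrow> range v \<subseteq> S \<Longrightarrow>
    signed_le b (eval ops S P F v (expand cor cand t n \<phi>)) (eval ops S P F v \<phi>)"
proof (induction \<phi> arbitrary: b v)
  case (Conn c fs)
  have "signed_le (pol c i = b) (eval ops S P F v (expand cor cand t n (fs ! i))) (eval ops S P F v (fs ! i))"
    if "i < length fs" for i
    using Conn.IH[OF nth_mem[OF that] only_weak_Conn_nth[OF Conn.prems(1) that]] Conn.prems that
    by simp
  with Conn.prems show ?case
    by (simp add: comp_def ops_map_signed_le[OF L])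
next
  case (Ex x \<phi>)
  have "(SUP i\<in>{1..n}. eval ops S P F (v(x := teval F v (t i))) (expand cor cand t n \<phi>))
      \<le> (SUP a\<in>S. eval ops S P F (v(x := a)) \<phi>)"
  proof (rule SUP_mono)
    fix i assume "i \<in> {1..n}"
    then have a: "teval F v (t i) \<in> S"
      using Ex.prems(3) teval_in_domain[OF S] t by auto
    with Ex.prems have "signed_le b (eval ops S P F (v(x := teval F v (t i))) (expand cor cand t n \<phi>))
      (eval ops S P F (v(x := teval F v (t i))) \<phi>)"
      by (intro Ex.IH) auto
    with Ex.prems have "eval ops S P F (v(x := teval F v (t i))) (expand cor cand t n \<phi>)
      \<le> eval ops S P F (v(x := teval F v (t i))) \<phi>"
      by (simp add: signed_le_def)
    with a show "\<exists>a\<in>S. eval ops S P F (v(x := teval F v (t i))) (expand cor cand t n \<phi>)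
      \<le> eval ops S P F (v(x := a)) \<phi>" ..
  qed
  with Ex.prems show ?case
    by (simp add: eval_expand_Ex[OF L n] signed_le_def del: expand.simps)
next
  case (All x \<phi>)
  have "(INF a\<in>S. eval ops S P F (v(x := a)) \<phi>)
      \<le> (INF i\<in>{1..n}. eval ops S P F (v(x := teval F v (t i))) (expand cor cand t n \<phi>))"
  proof (rule INF_mono)
    fix i assume "i \<in> {1..n}"
    then have a: "teval F v (t i) \<in> S"
      using All.prems(3) teval_in_domain[OF S] t by auto
    with All.prems have "signed_le b (eval ops S P F (v(x := teval F v (t i))) (expand cor cand t n \<phi>))
      (eval ops S P F (v(x := teval F v (t i))) \<phi>)"
      by (intro All.IH) auto
    with All.prems have "eval ops S P F (v(x := teval F v (t i))) \<phi>
      \<le> eval ops S P F (v(x := teval F v (t i))) (expand cor cand t n \<phi>)"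
      by (simp add: signed_le_def)
    with a show "\<exists>a\<in>S. eval ops S P F (v(x := a)) \<phi>
      \<le> eval ops S P F (v(x := teval F v (t i))) (expand cor cand t n \<phi>)" ..
  qed
  with All.prems show ?case
    by (simp add: eval_expand_All[OF L n] signed_le_def del: expand.simps)
qed (simp add: signed_le_def)

lemma signed_le_eval_expand_mono:
  assumes L: "L_lattice ar pol cor cand cimp ops" and mn: "1 \<le> m" "m \<le> n"
  shows "only_weak pol b \<phi> \<Longrightarrow> wf_fm ar fa pa \<phi> \<Longrightarrow>
    signed_le b (eval ops S P F v (expand cor cand t m \<phi>)) (eval ops S P F v (expand cor cand t n \<phi>))"
proof (induction \<phi> arbitrary: b v)
  case (Conn c fs)
  have "signed_le (pol c i = b) 
      (eval ops S P F v (expand cor cand t m (fs ! i))) (eval ops S P F v (expand cor cand t n (fs ! i)))"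
    if "i < length fs" for i
    using Conn.IH[OF nth_mem[OF that] only_weak_Conn_nth[OF Conn.prems(1) that]] Conn.prems that
    by simp
  with Conn.prems show ?case
    by (simp add: comp_def ops_map_signed_le[OF L])
next
  case (Ex x \<phi>)
  then have "eval ops S P F (v(x := teval F v (t i))) (expand cor cand t m \<phi>)
      \<le> eval ops S P F (v(x := teval F v (t i))) (expand cor cand t n \<phi>)" for i
    using Ex.IH[of b "v(x := teval F v (t i))"] by (auto simp: signed_le_def)
  with Ex.prems mn show ?case
    by (auto simp: eval_expand_Ex[OF L] signed_le_def simp del: expand.simps intro!: SUP_mono)
      fastforce
next
  case (All x \<phi>)
  then have "eval ops S P F (v(x := teval F v (t i))) (expand cor cand t n \<phi>)
      \<le> eval ops S P F (v(x := teval F v (t i))) (expand cor cand t m \<phi>)" for i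
    using All.IH[of b "v(x := teval F v (t i))"] by (auto simp: signed_le_def)
  with All.prems mn show ?case
    by (auto simp: eval_expand_All[OF L] signed_le_def simp del: expand.simps intro!: INF_mono)
      fastforce
qed (simp add: signed_le_def)

lemma eventually_SUP_le:
  fixes y :: "'b \<Rightarrow> 'a::complete_lattice"
  assumes "finite (y ` A)" "\<forall>a\<in>A. eventually (\<lambda>n. y a \<le> e n) F"
  shows "eventually (\<lambda>n. (SUP a\<in>A. y a) \<le> e n) F"
proof -
  have "eventually (\<lambda>n. \<forall>z\<in>y ` A. z \<le> e n) F"
    using assms by (intro eventually_ball_finite) auto
  then show ?thesis
    by (rule eventually_mono) (simp add: SUP_least)
qed

lemma eventually_le_INF:
  fixes y :: "'b \<Rightarrow> 'a::complete_lattice"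
  assumes "finite (y ` A)" "\<forall>a\<in>A. eventually (\<lambda>n. e n \<le> y a) F"
  shows "eventually (\<lambda>n. e n \<le> (INF a\<in>A. y a)) F"
proof -
  have "eventually (\<lambda>n. \<forall>z\<in>y ` A. e n \<le> z) F"
    using assms by (intro eventually_ball_finite) auto
  then show ?thesis
    by (rule eventually_mono) (simp add: INF_greatest)
qed

lemma eventually_eval_Ex_le_expand:
  fixes ops :: "'c \<Rightarrow> 'a::{finite,complete_lattice} list \<Rightarrow> 'a"
  assumes L: "L_lattice ar pol cor cand cimp ops"
    and named: "\<forall>a\<in>S. \<exists>i\<ge>1. \<forall>w. teval F w (t i) = a"
    and conv: "\<forall>a\<in>S. eventually (\<lambda>n. eval ops S P F (v(x := a)) (expand cor cand t n \<phi>)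
      = eval ops S P F (v(x := a)) \<phi>) sequentially"
  shows "eventually (\<lambda>n. eval ops S P F v (Ex x \<phi>) \<le> eval ops S P F v (expand cor cand t n (Ex x \<phi>))) sequentially"
proof -
  have "eventually (\<lambda>n. eval ops S P F (v(x := a)) \<phi> \<le> eval ops S P F v (expand cor cand t n (Ex x \<phi>))) sequentially"
    if "a \<in> S" for a
  proof -
    obtain i where i: "i \<ge> 1" "\<forall>w. teval F w (t i) = a"
      using named \<open>a \<in> S\<close> by blast
    have "eventually (\<lambda>n. eval ops S P F (v(x := a)) (expand cor cand t n \<phi>)
      = eval ops S P F (v(x := a)) \<phi>) sequentially"
      using conv \<open>a \<in> S\<close> by blast
    then show ?thesis
      using eventually_ge_at_top[of i]
    proof eventually_elim
      case (elim n)
      with i show ?case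
        by (auto simp: eval_expand_Ex[OF L] simp del: expand.simps intro!: SUP_upper2[of i])
    qed
  qed
  then show ?thesis
    by (simp del: expand.simps add: eventually_SUP_le)
qed

lemma eventually_eval_expand_le_All:
  fixes ops :: "'c \<Rightarrow> 'a::{finite,complete_lattice} list \<Rightarrow> 'a"
  assumes L: "L_lattice ar pol cor cand cimp ops"
    and named: "\<forall>a\<in>S. \<exists>i\<ge>1. \<forall>w. teval F w (t i) = a"
    and conv: "\<forall>a\<in>S. eventually (\<lambda>n. eval ops S P F (v(x := a)) (expand cor cand t n \<phi>)
      = eval ops S P F (v(x := a)) \<phi>) sequentially"
  shows "eventually (\<lambda>n. eval ops S P F v (expand cor cand t n (All x \<phi>)) \<le> eval ops S P F v (All x \<phi>)) sequentially"
proof -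
  have "eventually (\<lambda>n. eval ops S P F v (expand cor cand t n (All x \<phi>)) \<le> eval ops S P F (v(x := a)) \<phi>) sequentially"
    if "a \<in> S" for a
  proof -
    obtain i where i: "i \<ge> 1" "\<forall>w. teval F w (t i) = a"
      using named \<open>a \<in> S\<close> by blast
    have "eventually (\<lambda>n. eval ops S P F (v(x := a)) (expand cor cand t n \<phi>)
      = eval ops S P F (v(x := a)) \<phi>) sequentially"
      using conv \<open>a \<in> S\<close> by blast
    then show ?thesis
      using eventually_ge_at_top[of i]
    proof eventually_elim
      case (elim n)
      with i show ?case
        by (auto simp: eval_expand_All[OF L] simp del: expand.simps intro!: INF_lower2[of i])
    qed
  qed
  then show ?thesis
    by (simp del: expand.simps add: eventually_le_INF)
qed

lemma eventually_eval_expand_eq: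
  fixes ops :: "'c \<Rightarrow> 'a::{finite,complete_lattice} list \<Rightarrow> 'a"
  assumes L: "L_lattice ar pol cor cand cimp ops" and S: "is_structure fa S F"
    and t: "\<forall>i\<ge>1. wf_trm fa (t i)"
    and named: "\<forall>a\<in>S. \<exists>i\<ge>1. \<forall>w. teval F w (t i) = a"
  shows "only_weak pol b \<phi> \<Longrightarrow> wf_fm ar fa pa \<phi> \<Longrightarrow> range v \<subseteq> S \<Longrightarrow>
    eventually (\<lambda>n. eval ops S P F v (expand cor cand t n \<phi>) = eval ops S P F v \<phi>) sequentially"
proof (induction \<phi> arbitrary: b v)
  case (Conn c fs)
  have "eventually (\<lambda>n. eval ops S P F v (expand cor cand t n \<psi>) = eval ops S P F v \<psi>) sequentially"
    if \<psi>: "\<psi> \<in> set fs" for \<psi>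
  proof -
    obtain i where "i < length fs" "fs ! i = \<psi>"
      using \<psi> by (metis in_set_conv_nth)
    then have "only_weak pol (pol c i = b) \<psi>"
      using only_weak_Conn_nth[OF Conn.prems(1)] by blast
    with Conn.IH[OF \<psi>] Conn.prems \<psi> show ?thesis
      by simp
  qed
  then have "eventually (\<lambda>n. \<forall>\<psi>\<in>set fs. eval ops S P F v (expand cor cand t n \<psi>) = eval ops S P F v \<psi>) sequentially"
    by (intro eventually_ball_finite) auto
  then show ?case
    by (rule eventually_mono) (simp add: comp_def cong: map_cong)
next
  case (Ex x \<phi>)
  have "\<forall>a\<in>S. eventually (\<lambda>n. eval ops S P F (v(x := a)) (expand cor cand t n \<phi>)
      = eval ops S P F (v(x := a)) \<phi>) sequentially"
    using Ex.prems by (intro ballI Ex.IH[of b]) auto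
  then have "eventually (\<lambda>n. eval ops S P F v (Ex x \<phi>) \<le> eval ops S P F v (expand cor cand t n (Ex x \<phi>))) sequentially"
    by (rule eventually_eval_Ex_le_expand[OF L named])
  with eventually_ge_at_top[of 1] show ?case
  proof eventually_elim
    case (elim n)
    have "signed_le b (eval ops S P F v (expand cor cand t n (Ex x \<phi>))) (eval ops S P F v (Ex x \<phi>))"
      using Ex.prems by (intro signed_le_eval_expand[OF L S t \<open>n \<ge> 1\<close>])
    with elim Ex.prems show ?case
      by (auto simp: signed_le_def simp del: expand.simps eval.simps)
  qed
next
  case (All x \<phi>)
  have "\<forall>a\<in>S. eventually (\<lambda>n. eval ops S P F (v(x := a)) (expand cor cand t n \<phi>)
      = eval ops S P F (v(x := a)) \<phi>) sequentially"
    using All.prems by (intro ballI All.IH[of b]) auto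
  then have "eventually (\<lambda>n. eval ops S P F v (expand cor cand t n (All x \<phi>)) \<le> eval ops S P F v (All x \<phi>)) sequentially"
    by (rule eventually_eval_expand_le_All[OF L named])
  with eventually_ge_at_top[of 1] show ?case
  proof eventually_elim
    case (elim n)
    have "signed_le b (eval ops S P F v (expand cor cand t n (All x \<phi>))) (eval ops S P F v (All x \<phi>))"
      using All.prems by (intro signed_le_eval_expand[OF L S t \<open>n \<ge> 1\<close>])
    with elim All.prems show ?case
      by (auto simp: signed_le_def simp del: expand.simps eval.simps)
  qed
qed simp

lemma infinite_subset_agreeing_on:
  fixes h :: "nat \<Rightarrow> 'k \<Rightarrow> 'a::finite"
  assumes "infinite N" "finite B"
  shows "\<exists>N'\<subseteq>N. infinite N' \<and> (\<forall>n\<in>N'. \<forall>n'\<in>N'. \<forall>k\<in>B. h n k = h n' k)"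
proof -
  define graph where "graph n = (\<lambda>k. (k, h n k)) ` B" for n
  have "graph ` N \<subseteq> Pow (B \<times> UNIV)"
    by (auto simp: graph_def)
  moreover have "finite (Pow (B \<times> (UNIV :: 'a set)))"
    using assms(2) by simp
  ultimately have "finite (graph ` N)"
    by (rule finite_subset)
  with assms(1) obtain n0 where "infinite {n\<in>N. graph n = graph n0}"
    using pigeonhole_infinite by blast
  then show ?thesis
    by (intro exI[of _ "{n\<in>N. graph n = graph n0}"]) (auto simp: graph_def)
qed

lemma cluster_point_of_nested_sets:
  fixes h :: "nat \<Rightarrow> 'k \<Rightarrow> 'a"
  assumes inf: "\<And>m. infinite (N m)"
    and agree: "\<And>m n n' k. n \<in> N m \<Longrightarrow> n' \<in> N m \<Longrightarrow> k \<in> A m \<Longrightarrow> h n k = h n' k"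
    and dec: "\<And>m m'. m \<le> m' \<Longrightarrow> N m' \<subseteq> N m"
  shows "\<exists>g. \<forall>m. \<exists>n\<ge>m. \<forall>k\<in>A m. g k = h n k"
proof -
  define g where "g k = h (SOME n. n \<in> N (LEAST m. k \<in> A m)) k" for k
  have "\<exists>n\<ge>m. \<forall>k\<in>A m. g k = h n k" for m
  proof -
    have "\<not> (\<forall>n\<in>N m. n \<le> m)"
      using inf[of m] finite_nat_set_iff_bounded_le by blast
    then obtain n where n: "n \<in> N m" "n \<ge> m"
      by force
    have "g k = h n k" if "k \<in> A m" for k
    proof -
      define m0 where "m0 = (LEAST j. k \<in> A j)"
      have m0: "k \<in> A m0" "m0 \<le> m"
        using that unfolding m0_def by (auto intro: LeastI Least_le)
      have "N m0 \<noteq> {}"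
        using inf[of m0] by auto
      then have "(SOME n. n \<in> N m0) \<in> N m0"
        by (simp add: some_in_eq)
      moreover have "n \<in> N m0"
        using dec[OF m0(2)] n(1) by blast
      ultimately have "h (SOME n. n \<in> N m0) k = h n k"
        using m0(1) by (rule agree)
      then show ?thesis
        by (simp add: g_def m0_def)
    qed
    with n show ?thesis
      by blast
  qed
  then show ?thesis
    by blast
qed

lemma finite_valued_cluster_point:
  fixes h :: "nat \<Rightarrow> 'k \<Rightarrow> 'a::finite"
  assumes fin: "\<And>m. finite (A m)"
  shows "\<exists>g. \<forall>m. \<exists>n\<ge>m. \<forall>k\<in>A m. g k = h n k"
proof -
  define agree where "agree m N \<longleftrightarrow> infinite N \<and> (\<forall>n\<in>N. \<forall>n'\<in>N. \<forall>k\<in>A m. h n k = h n' k)" for m N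
  have "\<exists>N. \<forall>m. agree m (N m) \<and> N (Suc m) \<subseteq> N m"
  proof (rule dependent_nat_choice)
    show "\<exists>N. agree 0 N"
      using infinite_subset_agreeing_on[OF infinite_UNIV_nat fin] by (auto simp: agree_def)
    show "\<exists>N'. agree (Suc m) N' \<and> N' \<subseteq> N" if "agree m N" for m N
    proof -
      have "infinite N"
        using that by (simp add: agree_def)
      from infinite_subset_agreeing_on[OF this fin[of "Suc m"], of h] show ?thesis
        by (auto simp: agree_def)
    qed
  qed
  then obtain N where agree: "\<And>m. agree m (N m)" and shrink: "\<And>m. N (Suc m) \<subseteq> N m"
    by blast
  show ?thesis
  proof (rule cluster_point_of_nested_sets[where N = N])
    show "infinite (N m)" for m
      using agree[of m] by (simp add: agree_def)
    show "h n k = h n' k" if "n \<in> N m" "n' \<in> N m" "k \<in> A m" for m n n' k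
      using agree[of m] that unfolding agree_def by blast
    show "N m' \<subseteq> N m" if "m \<le> m'" for m m'
      using shrink that by (rule lift_Suc_antimono_le)
  qed
qed

lemma common_countermodel:
  fixes ops :: "'c \<Rightarrow> 'a::{finite,complete_lattice} list \<Rightarrow> 'a"
  assumes L: "L_lattice ar pol cor cand cimp ops"
    and E: "wf_fm ar fa pa E" "only_weak pol True E"
    and counter: "\<forall>n\<ge>1. \<exists>P. eval ops S P F v (expand cor cand t n E) \<noteq> top"
  shows "\<exists>P. \<forall>n\<ge>1. eval ops S P F v (expand cor cand t n E) \<noteq> top"
proof -
  obtain Q where Q: "\<And>n. n \<ge> 1 \<Longrightarrow> eval ops S (Q n) F v (expand cor cand t n E) \<noteq> top"
    using counter by metis
  define A where "A m = (\<lambda>(p, ts). (p, map (teval F v) ts)) ` atoms (expand cor cand t m E)" for m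
  have "\<exists>g. \<forall>m. \<exists>n\<ge>m. \<forall>k\<in>A m. g k = (case k of (p, us) \<Rightarrow> Q n p us)"
    by (rule finite_valued_cluster_point) (simp add: A_def finite_atoms)
  then obtain g where g: "\<forall>m. \<exists>n\<ge>m. \<forall>(p, us)\<in>A m. g (p, us) = Q n p us"
    by fast
  have "eval ops S (\<lambda>p us. g (p, us)) F v (expand cor cand t m E) \<noteq> top" if m: "m \<ge> 1" for m
  proof
    assume top: "eval ops S (\<lambda>p us. g (p, us)) F v (expand cor cand t m E) = top"
    obtain n where n: "n \<ge> m" and agree: "\<forall>(p, us)\<in>A m. g (p, us) = Q n p us"
      using g by blast
    have "eval ops S (\<lambda>p us. g (p, us)) F v (expand cor cand t m E) = eval ops S (Q n) F v (expand cor cand t m E)"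
      using agree by (intro eval_qfree_cong[OF qfree_expand]) (auto simp: A_def)
    also have "\<dots> \<le> eval ops S (Q n) F v (expand cor cand t n E)"
      using signed_le_eval_expand_mono[OF L m n, of True E] E by (simp add: signed_le_def)
    finally show False
      using top Q[of n] m n by (simp add: top_unique)
  qed
  then show ?thesis
    by blast
qed

definition closed_terms :: "('f \<Rightarrow> nat) \<Rightarrow> 'f trm set" where
  "closed_terms fa = {s. wf_trm fa s \<and> closed_trm s}"

text \<open>For j injective on the closed terms, this is the term algebra transported to the image of j.\<close>

definition term_fun :: "('f \<Rightarrow> nat) \<Rightarrow> ('f trm \<Rightarrow> 'u) \<Rightarrow> 'f \<Rightarrow> 'u list \<Rightarrow> 'u" where
  "term_fun fa j f us = j (Fn f (map (inv_into (closed_terms fa) j) us))"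

lemma closed_terms_Fn: "Fn f ts \<in> closed_terms fa \<longleftrightarrow> length ts = fa f \<and> set ts \<subseteq> closed_terms fa"
  by (auto simp: closed_terms_def closed_trm_def)

lemma teval_term_fun:
  assumes "inj_on j (closed_terms fa)" "s \<in> closed_terms fa"
  shows "teval (term_fun fa j) w s = j s"
  using assms(2)
proof (induction s)
  case (Fn f ts)
  then have "set ts \<subseteq> closed_terms fa"
    by (simp add: closed_terms_Fn)
  with Fn.IH assms(1) show ?case
    by (auto simp: term_fun_def subset_iff intro!: arg_cong[where f = j] map_idI)
qed (simp add: closed_terms_def closed_trm_def)

lemma is_structure_term_fun:
  assumes "inj_on j (closed_terms fa)" "fa c = 0"
  shows "is_structure fa (j ` closed_terms fa) (term_fun fa j)"
  unfolding is_structure_def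
proof (intro conjI allI impI)
  show "j ` closed_terms fa \<noteq> {}"
    using assms(2) closed_terms_Fn[of c "[]" fa] by auto
  fix f us assume "length us = fa f \<and> set us \<subseteq> j ` closed_terms fa"
  then have "Fn f (map (inv_into (closed_terms fa) j) us) \<in> closed_terms fa"
    by (auto simp: closed_terms_Fn inv_into_into)
  then show "term_fun fa j f us \<in> j ` closed_terms fa"
    by (simp add: term_fun_def)
qed

lemma eval_term_fun:
  assumes "inj_on j (closed_terms fa)" "qfree \<psi>" "\<forall>(p, ts)\<in>atoms \<psi>. set ts \<subseteq> closed_terms fa"
  shows "eval ops S' (\<lambda>p us. P p (map (teval F v \<circ> inv_into (closed_terms fa) j) us)) (term_fun fa j) w \<psi>
    = eval ops S P F v \<psi>"
proof (rule eval_qfree_cong[OF assms(2)], safe)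
  fix p ts assume "(p, ts) \<in> atoms \<psi>"
  with assms(3) have "s \<in> closed_terms fa" if "s \<in> set ts" for s
    using that by blast
  then show "P p (map (teval F v \<circ> inv_into (closed_terms fa) j) (map (teval (term_fun fa j) w) ts))
    = P p (map (teval F v) ts)"
    by (simp add: comp_def teval_term_fun[OF assms(1)] inv_into_f_f[OF assms(1)] cong: map_cong)
qed

lemma atoms_expand_closed:
  assumes "t ` {1..} \<subseteq> closed_terms fa" "wf_fm ar fa pa E" "sentence E"
  shows "\<forall>(p, ts)\<in>atoms (expand cor cand t n E). set ts \<subseteq> closed_terms fa"
proof (clarify)
  fix p ts s assume atom: "(p, ts) \<in> atoms (expand cor cand t n E)" "s \<in> set ts"
  have "\<forall>i\<ge>1. wf_trm fa (t i) \<and> tvars (t i) = {}"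
    using assms(1) by (auto simp: closed_terms_def closed_trm_def)
  then have "wf_trm fa s \<and> tvars s \<subseteq> fvars E"
    by (rule atoms_expand[OF _ assms(2) atom])
  with assms(3) show "s \<in> closed_terms fa"
    by (simp add: closed_terms_def closed_trm_def sentence_def)
qed

lemma valid1_expand_imp_valid1:
  fixes U :: "'u itself"
  assumes L: "L_lattice ar pol cor cand cimp ops" and t: "\<forall>i\<ge>1. wf_trm fa (t i)" and n: "n \<ge> 1"
    and E: "wf_fm ar fa pa E" "only_weak pol True E"
    and valid: "valid1 U ops fa (expand cor cand t n E)"
  shows "valid1 U ops fa E"
  unfolding valid1_def
proof (intro allI impI)
  fix S :: "'u set" and P F and v :: "nat \<Rightarrow> 'u"
  assume "is_structure fa S F \<and> range v \<subseteq> S"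
  with E have "eval ops S P F v (expand cor cand t n E) \<le> eval ops S P F v E"
    using signed_le_eval_expand[OF L _ t n, of S F True E pa v P] by (simp add: signed_le_def)
  with valid \<open>is_structure fa S F \<and> range v \<subseteq> S\<close> show "eval ops S P F v E = top"
    by (simp add: valid1_def top_unique)
qed

lemma inj_on_closed_terms_exists:
  fixes t :: "nat \<Rightarrow> 'f trm"
  assumes "infinite (UNIV :: 'u set)" "t ` {1..} = closed_terms fa"
  shows "\<exists>j :: 'f trm \<Rightarrow> 'u. inj_on j (closed_terms fa)"
proof -
  obtain g :: "nat \<Rightarrow> 'u" where "inj g"
    using infinite_countable_subset[OF assms(1)] by blast
  have "inj_on (g \<circ> inv_into {1..} t) (closed_terms fa)"
  proof (rule comp_inj_on)
    show "inj_on (inv_into {1..} t) (closed_terms fa)"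
      using assms(2) by (simp add: inj_on_inv_into)
    show "inj_on g (inv_into {1..} t ` closed_terms fa)"
      using \<open>inj g\<close> by (rule inj_on_subset) simp
  qed
  then show ?thesis
    by blast
qed

lemma term_fun_named:
  fixes t :: "nat \<Rightarrow> 'f trm" and j :: "'f trm \<Rightarrow> 'u"
  assumes "inj_on j (closed_terms fa)" "t ` {1..} = closed_terms fa"
  shows "\<forall>a\<in>j ` closed_terms fa. \<exists>i\<ge>1. \<forall>w. teval (term_fun fa j) w (t i) = a"
proof
  fix a assume "a \<in> j ` closed_terms fa"
  then obtain s where "s \<in> closed_terms fa" "a = j s"
    by blast
  moreover obtain i where "i \<ge> 1" "t i = s"
    using assms(2) \<open>s \<in> closed_terms fa\<close> by (metis atLeast_iff imageE)
  ultimately show "\<exists>i\<ge>1. \<forall>w. teval (term_fun fa j) w (t i) = a"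
    using teval_term_fun[OF assms(1)] by auto
qed

lemma valid1_imp_valid1_expand:
  fixes ops :: "'c \<Rightarrow> 'a::{finite,complete_lattice} list \<Rightarrow> 'a"
  assumes L: "L_lattice ar pol cor cand cimp ops"
    and inf: "infinite (UNIV :: 'u set)" and c: "fa c = 0"
    and t: "t ` {1..} = closed_terms fa"
    and E: "wf_fm ar fa pa E" "sentence E" "only_weak pol True E"
    and valid: "valid1 TYPE('u) ops fa E"
  shows "\<exists>n\<ge>1. valid1 TYPE('u) ops fa (expand cor cand t n E)"
proof (rule ccontr)
  assume not_valid: "\<not> ?thesis"
  obtain j :: "_ \<Rightarrow> 'u" where inj: "inj_on j (closed_terms fa)"
    using inj_on_closed_terms_exists[OF inf t] by blast
  define S0 F0 v0 where "S0 = j ` closed_terms fa" and "F0 = term_fun fa j" and "v0 = (\<lambda>_::nat. j (Fn c []))"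
  have S0: "is_structure fa S0 F0" "range v0 \<subseteq> S0"
    using is_structure_term_fun[OF inj c] c by (auto simp: S0_def F0_def v0_def closed_terms_Fn)
  have named: "\<forall>a\<in>S0. \<exists>i\<ge>1. \<forall>w. teval F0 w (t i) = a"
    unfolding S0_def F0_def by (rule term_fun_named[OF inj t])
  have closed: "\<forall>(p, ts)\<in>atoms (expand cor cand t n E). set ts \<subseteq> closed_terms fa" for n
    using atoms_expand_closed[OF equalityD1[OF t] E(1,2)] .
  have "\<exists>P. eval ops S0 P F0 v0 (expand cor cand t n E) \<noteq> top" if "n \<ge> 1" for n
  proof -
    obtain S :: "'u set" and P F and v :: "nat \<Rightarrow> 'u" where "is_structure fa S F" "range v \<subseteq> S" "eval ops S P F v (expand cor cand t n E) \<noteq> top"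
      using not_valid \<open>n \<ge> 1\<close> by (auto simp: valid1_def)
    then show ?thesis
      by (metis F0_def eval_term_fun[OF inj qfree_expand closed])
  qed
  then obtain P where P: "\<forall>n\<ge>1. eval ops S0 P F0 v0 (expand cor cand t n E) \<noteq> top"
    using common_countermodel[OF L E(1,3)] by blast
  have t_wf: "\<forall>i\<ge>1. wf_trm fa (t i)"
    using t by (auto simp: closed_terms_def)
  have "eventually (\<lambda>n. eval ops S0 P F0 v0 (expand cor cand t n E) = eval ops S0 P F0 v0 E) sequentially"
    using eventually_eval_expand_eq[OF L S0(1) t_wf named E(3,1) S0(2)] .
  moreover have "eval ops S0 P F0 v0 E = top"
    using valid S0 by (simp add: valid1_def)
  ultimately obtain N where "\<forall>n\<ge>N. eval ops S0 P F0 v0 (expand cor cand t n E) = top"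
    by (auto simp: eventually_sequentially)
  with P show False
    by (metis max.cobounded1 max.cobounded2)
qed

theorem mainTheorem16:
  fixes ar :: "'c \<Rightarrow> nat" and pol :: "'c \<Rightarrow> nat \<Rightarrow> bool" and cor cand cimp :: 'c
    and ops :: "'c \<Rightarrow> 'a::{finite,complete_lattice} list \<Rightarrow> 'a"
    and fa :: "'f \<Rightarrow> nat" and pa :: "'p \<Rightarrow> nat"
    and t :: "nat \<Rightarrow> 'f trm" and E :: "('c, 'p, 'f) fm"
  assumes "lo_signature ar pol cor cand cimp"
    and "L_lattice ar pol cor cand cimp ops"
    and "infinite (UNIV :: 'u set)"
    and "\<exists>f. fa f = 0"
    and "t ` {1..} = {s. wf_trm fa s \<and> closed_trm s}"
    and "wf_fm ar fa pa E"
    and "sentence E"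
    and "only_weak pol True E"
  shows "valid1 TYPE('u) ops fa E \<longleftrightarrow>
         (\<exists>n\<ge>1. valid1 TYPE('u) ops fa (expand cor cand t n E))"
proof
  have t: "t ` {1..} = closed_terms fa"
    using assms(5) by (simp add: closed_terms_def)
  obtain c where "fa c = 0"
    using assms(4) by blast
  show "valid1 TYPE('u) ops fa E \<Longrightarrow> \<exists>n\<ge>1. valid1 TYPE('u) ops fa (expand cor cand t n E)"
    using valid1_imp_valid1_expand[OF assms(2,3) \<open>fa c = 0\<close> t assms(6-8)] .
next
  have t_wf: "\<forall>i\<ge>1. wf_trm fa (t i)"
    using assms(5) by auto
  show "\<exists>n\<ge>1. valid1 TYPE('u) ops fa (expand cor cand t n E) \<Longrightarrow> valid1 TYPE('u) ops fa E"
    using valid1_expand_imp_valid1[OF assms(2) t_wf _ assms(6,8)] by blast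
qed

end
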